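(* Let $f,\rho\in L^1(SE(2))$ be supported in $\mathbb{D}_{1/4}$ with $\rho$ radial in translations, and let $\psi:=\widetilde{f}$. Then for every $\mathbf{k}\in\mathbb{Z}^3$, \[ \widehat{\psi\oslash\rho}\{\mathbf{k}\}=\widehat{\psi}\{\mathbf{k}\}\,\widehat{\rho}[\mathbf{k}]. \]
   Context: $SE(2)=\mathbb{R}^2\rtimes SO(2)$, group law $(\mathbf{x},\mathbf{R})\circ(\mathbf{x}',\mathbf{R}')=(\mathbf{x}+\mathbf{R}\mathbf{x}',\mathbf{R}\mathbf{R}')$, elements parametrized by $(x,y,\theta)$, Haar measure $\mathrm{d}\mathbf{g}=\frac{1}{2\pi}\mathrm{d}x\,\mathrm{d}y\,\mathrm{d}\theta$. $\mathbb{L}=\{(\boldsymbol{\ell},\mathbf{I}):\boldsymbol{\ell}\in\mathbb{Z}^2\}$, $\mathbb{X}=\mathbb{L}\backslash SE(2)$, $\mu$ the normalized invariant measure on $\mathbb{X}$ (with $\int_{\mathbb{X}}\widetilde{f}\,\mathrm{d}\mu=\int_{SE(2)}f$), where $\widetilde{f}(\mathbb{L}(\mathbf{x},\mathbf{R}))=\sum_{\boldsymbol{\ell}\in\mathbb{Z}^2}f(\boldsymbol{\ell}+\mathbf{x},\mathbf{R})$. For $\psi\in L^1(\mathbb{X},\mu)$ and $g\in L^1(SE(2))$, $(\psi\oslash g)(\mathbb{L}\mathbf{g})=\int_{SE(2)}\psi(\mathbb{L}\mathbf{h})g(\mathbf{h}^{-1}\circ\mathbf{g})\,\mathrm{d}\mathbf{h}$.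 $\mathbb{D}_a=\{(\mathbf{x},\mathbf{R}):\|\mathbf{x}\|_2\le a\}$. $\rho$ radial in translations: $\rho(\mathbf{x},\mathbf{R})=\rho(\mathbf{S}\mathbf{x},\mathbf{R})$ for all $\mathbf{x}$, $\mathbf{R},\mathbf{S}\in SO(2)$. With $\varphi_{\mathbf{k}}(\mathbb{L}(x,y,\theta))=e^{2\pi\mathrm{i}(k_1x+k_2y)}e^{\mathrm{i}k_3\theta}$, $\widehat{\psi}\{\mathbf{k}\}=\int_{\mathbb{X}}\psi\,\overline{\varphi_{\mathbf{k}}}\,\mathrm{d}\mu$. With $\phi_{\mathbf{k}}(x,y,\theta)=e^{2\pi\mathrm{i}(k_1x+k_2y)}e^{\mathrm{i}k_3\theta}$ and $\Omega=[-\tfrac12,\tfrac12)^2\times SO(2)$, for $\rho$ supported in $\Omega$, $\widehat{\rho}[\mathbf{k}]=\frac{1}{2\pi}\int_0^{2\pi}\int_{[-1/2,1/2)^2}\rho\,\overline{\phi_{\mathbf{k}}}\,\mathrm{d}x\,\mathrm{d}y\,\mathrm{d}\theta$. *)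

theory Defs
  imports "HOL-Analysis.Analysis"
begin

text \<open>Elements of SE(2) are represented by triples (x, y, theta) :: real * real * real;
  functions on SE(2) are functions on such triples that are 2pi-periodic in theta.
  Group law: (x,R) o (x',R') = (x + R x', R R').\<close>

type_synonym se2 = "real \<times> real \<times> real"

definition rot :: "real \<Rightarrow> real \<Rightarrow> real \<Rightarrow> real \<times> real" where
  "rot t x y = (cos t * x - sin t * y, sin t * x + cos t * y)"

definition se2_mult :: "se2 \<Rightarrow> se2 \<Rightarrow> se2" where
  "se2_mult g h = (case g of (x, y, t) \<Rightarrow> case h of (x', y', t') \<Rightarrow>
     (x + fst (rot t x' y'), y + snd (rot t x' y'), t + t'))"

definition se2_inv :: "se2 \<Rightarrow> se2" where
  "se2_inv g = (case g of (x, y, t) \<Rightarrow>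
     (- fst (rot (- t) x y), - snd (rot (- t) x y), - t))"

definition se2_fun :: "(se2 \<Rightarrow> 'a) \<Rightarrow> bool" where
  "se2_fun f \<longleftrightarrow> (\<forall>x y t. f (x, y, t + 2 * pi) = f (x, y, t))"

definition se2_integral :: "(se2 \<Rightarrow> complex) \<Rightarrow> complex" where
  "se2_integral f = complex_of_real (1 / (2 * pi)) *
     (LINT p : (UNIV \<times> UNIV \<times> {0..<2 * pi}) | lborel. f p)"

definition se2_L1 :: "(se2 \<Rightarrow> complex) \<Rightarrow> bool" where
  "se2_L1 f \<longleftrightarrow> se2_fun f \<and> set_integrable lborel (UNIV \<times> UNIV \<times> {0..<2 * pi}) f"

definition supported_in_disk :: "real \<Rightarrow> (se2 \<Rightarrow> complex) \<Rightarrow> bool" where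
  "supported_in_disk a f \<longleftrightarrow> (\<forall>x y t. f (x, y, t) \<noteq> 0 \<longrightarrow> sqrt (x\<^sup>2 + y\<^sup>2) \<le> a)"

definition radial_transl :: "(se2 \<Rightarrow> complex) \<Rightarrow> bool" where
  "radial_transl f \<longleftrightarrow>
     (\<forall>x y t s. f (fst (rot s x y), snd (rot s x y), t) = f (x, y, t))"

text \<open>Functions on X = L\SE(2) are represented as functions on SE(2)
  invariant under left translation by Z^2. Periodization:\<close>
definition periodize :: "(se2 \<Rightarrow> complex) \<Rightarrow> se2 \<Rightarrow> complex" where
  "periodize f p = (case p of (x, y, t) \<Rightarrow>
     (\<Sum>\<^sub>\<infinity>l \<in> (UNIV :: (int \<times> int) set).
        f (of_int (fst l) + x, of_int (snd l) + y, t)))"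

definition convX :: "(se2 \<Rightarrow> complex) \<Rightarrow> (se2 \<Rightarrow> complex) \<Rightarrow> se2 \<Rightarrow> complex" where
  "convX psi g p = se2_integral (\<lambda>h. psi h * g (se2_mult (se2_inv h) p))"

definition phi :: "int \<times> int \<times> int \<Rightarrow> se2 \<Rightarrow> complex" where
  "phi k p = (case k of (k1, k2, k3) \<Rightarrow> case p of (x, y, t) \<Rightarrow>
     exp (2 * pi * \<i> * complex_of_real (of_int k1 * x + of_int k2 * y))
     * exp (\<i> * complex_of_real (of_int k3 * t)))"

text \<open>Fourier coefficient on X w.r.t. the normalized invariant measure mu
  (fundamental domain [0,1)^2 x [0,2pi), density 1/(2pi)).\<close>
definition fourierX :: "(se2 \<Rightarrow> complex) \<Rightarrow> int \<times> int \<times> int \<Rightarrow> complex" where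
  "fourierX psi k = complex_of_real (1 / (2 * pi)) *
     (LINT p : ({0..<1} \<times> {0..<1} \<times> {0..<2 * pi}) | lborel. psi p * cnj (phi k p))"

definition fourierOmega :: "(se2 \<Rightarrow> complex) \<Rightarrow> int \<times> int \<times> int \<Rightarrow> complex" where
  "fourierOmega rho k = complex_of_real (1 / (2 * pi)) *
     (LINT p : ({-1/2..<1/2} \<times> {-1/2..<1/2} \<times> {0..<2 * pi}) | lborel. rho p * cnj (phi k p))"

end

theory Submission imports Defs begin

(* Because f and rho live in the disk of radius 1/4, the periodization of f agrees with f
   on the centered cell [-1/2,1/2)^2 x SO(2), and periodize f \<oslash> rho is the periodization of the
   SE(2)-convolution of f and rho, which lives in the disk of radius 1/2. Both Fourier
   coefficients on X therefore become integrals over SE(2), and the claim reduces to the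
   convolution theorem on SE(2) for the functions phi_k: by Fubini and left invariance of the
   Haar measure the coefficient of the convolution factors, the rotation part of the group
   element being absorbed by the radiality of rho. *)

section \<open>Lebesgue-measure-preserving maps\<close>

definition lborel_preserving :: "('a::euclidean_space \<Rightarrow> 'a) \<Rightarrow> bool" where
  "lborel_preserving T \<longleftrightarrow> T \<in> borel_measurable borel \<and> distr lborel borel T = lborel"

lemma lborel_preserving_comp:
  assumes "lborel_preserving T1" "lborel_preserving T2"
  shows "lborel_preserving (T2 \<circ> T1)"
proof -
  have m1: "T1 \<in> measurable lborel borel" and m2: "T2 \<in> measurable borel borel"
    using assms unfolding lborel_preserving_def by (auto simp: measurable_lborel1)
  have "distr lborel borel (T2 \<circ> T1) = distr (distr lborel borel T1) borel T2"
    by (rule distr_distr[OF m2 m1, symmetric])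
  also have "\<dots> = lborel" using assms unfolding lborel_preserving_def by simp
  finally show ?thesis
    using assms measurable_comp[OF m1 m2] unfolding lborel_preserving_def by simp
qed

lemma lborel_preserving_translate: "lborel_preserving (\<lambda>u. u + v)"
proof -
  have "(\<lambda>u. u + v) = (+) v" by (rule ext) (simp add: add.commute)
  then show ?thesis unfolding lborel_preserving_def by (simp add: lborel_distr_plus)
qed

lemma emeasure_lborel_translate:
  fixes v :: "'a::euclidean_space"
  assumes "Y \<in> sets borel"
  shows "emeasure lborel ((\<lambda>u. u + v) -` Y) = emeasure lborel Y"
proof -
  have "emeasure (distr lborel borel ((+) v)) Y = emeasure lborel Y"
    by (simp add: lborel_distr_plus)
  moreover have "(\<lambda>u. u + v) = (+) v" by (rule ext) (simp add: add.commute)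
  ultimately show ?thesis using assms by (simp add: emeasure_distr)
qed

text \<open>Shears preserve Lebesgue measure by Tonelli: each fibre is merely translated.\<close>

lemma lborel_preserving_shear_snd:
  fixes g :: "'a::euclidean_space \<Rightarrow> 'b::euclidean_space"
  assumes g[measurable]: "g \<in> borel_measurable borel"
  shows "lborel_preserving (\<lambda>(x, z). (x, z + g x))"
proof -
  let ?T = "\<lambda>(x, z). (x, z + g x)"
  have "?T \<in> measurable (borel \<Otimes>\<^sub>M borel) (borel \<Otimes>\<^sub>M borel :: ('a \<times> 'b) measure)"
    by measurable
  then have m[measurable]: "?T \<in> borel_measurable (borel :: ('a \<times> 'b) measure)"
    by (simp add: borel_prod)
  have "distr lborel borel ?T = (lborel :: ('a \<times> 'b) measure)"
  proof (rule measure_eqI)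
    fix X :: "('a \<times> 'b) set" assume "X \<in> sets (distr lborel borel ?T)"
    then have Xb: "X \<in> sets borel" by simp
    have TX: "?T -` X \<in> sets (lborel \<Otimes>\<^sub>M lborel)"
      unfolding lborel_prod sets_lborel using measurable_sets_borel[OF m Xb] .
    have XX: "X \<in> sets (lborel \<Otimes>\<^sub>M lborel)" unfolding lborel_prod sets_lborel using Xb .
    have "emeasure (distr lborel borel ?T) X = emeasure (lborel \<Otimes>\<^sub>M lborel) (?T -` X)"
      using Xb m by (simp add: emeasure_distr lborel_prod)
    also have "\<dots> = (\<integral>\<^sup>+x. emeasure lborel (Pair x -` (?T -` X)) \<partial>lborel)"
      by (rule lborel.emeasure_pair_measure_alt[OF TX])
    also have "\<dots> = (\<integral>\<^sup>+x. emeasure lborel (Pair x -` X) \<partial>lborel)"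
    proof (rule nn_integral_cong)
      fix x :: 'a
      have "Pair x -` (?T -` X) = (\<lambda>z. z + g x) -` (Pair x -` X)" by auto
      moreover have "Pair x -` X \<in> sets borel" using XX by (metis sets_Pair1 sets_lborel)
      ultimately show "emeasure lborel (Pair x -` (?T -` X)) = emeasure lborel (Pair x -` X)"
        by (simp add: emeasure_lborel_translate)
    qed
    also have "\<dots> = emeasure lborel X"
      using lborel.emeasure_pair_measure_alt[OF XX] by (simp add: lborel_prod)
    finally show "emeasure (distr lborel borel ?T) X = emeasure lborel X" .
  qed simp
  then show ?thesis unfolding lborel_preserving_def by simp
qed

lemma distr_lborel_swap:
  "distr (lborel :: ('b::euclidean_space \<times> 'a::euclidean_space) measure) borel (\<lambda>(x, y). (y, x))
    = (lborel :: ('a \<times> 'b) measure)"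
proof -
  have "(lborel :: ('a \<times> 'b) measure)
      = distr (lborel \<Otimes>\<^sub>M lborel :: ('b \<times> 'a) measure) (lborel \<Otimes>\<^sub>M lborel) (\<lambda>(x, y). (y, x))"
    using lborel_pair.distr_pair_swap by (simp add: lborel_prod)
  also have "\<dots> = distr (lborel :: ('b \<times> 'a) measure) borel (\<lambda>(x, y). (y, x))"
    by (rule distr_cong) (simp_all only: lborel_prod sets_lborel)
  finally show ?thesis ..
qed

lemma lborel_preserving_shear_fst:
  fixes g :: "'b::euclidean_space \<Rightarrow> 'a::euclidean_space"
  assumes "g \<in> borel_measurable borel"
  shows "lborel_preserving (\<lambda>(x, z). (x + g z, z))"
proof -
  let ?S = "\<lambda>(x, y). (y, x)" and ?T = "\<lambda>(z, x). (z, x + g z)"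
  have S1: "(?S :: 'a \<times> 'b \<Rightarrow> 'b \<times> 'a) \<in> borel_measurable borel"
    and S2: "(?S :: 'b \<times> 'a \<Rightarrow> 'a \<times> 'b) \<in> borel_measurable borel"
    by (auto simp: case_prod_beta' intro!: borel_measurable_continuous_onI continuous_intros)
  have T: "lborel_preserving (?T :: 'b \<times> 'a \<Rightarrow> 'b \<times> 'a)"
    by (rule lborel_preserving_shear_snd[OF assms])
  then have Tm: "?T \<in> borel_measurable borel" unfolding lborel_preserving_def by simp
  have eq: "(\<lambda>(x, z). (x + g z, z)) = ?S \<circ> ?T \<circ> (?S :: 'a \<times> 'b \<Rightarrow> 'b \<times> 'a)" by auto
  have "distr lborel borel (?S \<circ> ?T \<circ> (?S :: 'a \<times> 'b \<Rightarrow> 'b \<times> 'a))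
      = distr (distr (distr lborel borel ?S) borel ?T) borel (?S :: 'b \<times> 'a \<Rightarrow> 'a \<times> 'b)"
    using S1 S2 Tm by (simp add: distr_distr comp_assoc measurable_comp)
  also have "\<dots> = lborel"
    using T distr_lborel_swap[where 'a='a and 'b='b] distr_lborel_swap[where 'a='b and 'b='a]
    unfolding lborel_preserving_def by simp
  finally show ?thesis
    unfolding eq lborel_preserving_def using S1 S2 Tm by (auto intro: measurable_comp)
qed

section \<open>Rotations of the translation part\<close>

definition se2_rotate :: "real \<Rightarrow> se2 \<Rightarrow> se2" where
  "se2_rotate s p = (case p of (x, y, t) \<Rightarrow> (fst (rot s x y), snd (rot s x y), t))"

definition shear_x :: "real \<Rightarrow> se2 \<Rightarrow> se2" where
  "shear_x a = (\<lambda>(x, z). (x + a * fst z, z))"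

definition shear_y :: "real \<Rightarrow> se2 \<Rightarrow> se2" where
  "shear_y b = (\<lambda>(x, z). (x, z + (b * x, 0)))"

lemma lborel_preserving_shear_x: "lborel_preserving (shear_x a)"
  unfolding shear_x_def
  by (rule lborel_preserving_shear_fst) (intro borel_measurable_continuous_onI continuous_intros)

lemma lborel_preserving_shear_y: "lborel_preserving (shear_y b)"
  unfolding shear_y_def by (rule lborel_preserving_shear_snd) measurable

text \<open>Paeth's decomposition of a rotation into three shears.\<close>

lemma se2_rotate_eq_shears:
  assumes "sin s \<noteq> 0"
  shows "se2_rotate s = shear_x ((cos s - 1) / sin s) \<circ> shear_y (sin s) \<circ> shear_x ((cos s - 1) / sin s)"
proof (rule ext, clarify)
  fix x y t :: real
  let ?a = "(cos s - 1) / sin s"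
  have e1: "1 + ?a * sin s = cos s" using assms by (simp add: field_simps)
  have e2: "?a * (1 + cos s) = - sin s"
  proof -
    have "?a * (1 + cos s) = (cos s ^ 2 - 1) / sin s" by (simp add: field_simps power2_eq_square)
    also have "\<dots> = - (sin s ^ 2) / sin s" by (simp add: sin_squared_eq)
    finally show ?thesis using assms by (simp add: power2_eq_square)
  qed
  have "x + ?a * y + ?a * (y + sin s * (x + ?a * y))
      = (1 + ?a * sin s) * x + ?a * (1 + (1 + ?a * sin s)) * y"
    by (simp add: algebra_simps)
  also have "\<dots> = cos s * x - sin s * y" by (simp only: e1 e2)
  finally have "x + ?a * y + ?a * (y + sin s * (x + ?a * y)) = cos s * x - sin s * y" .
  moreover have "y + sin s * (x + ?a * y) = sin s * x + (1 + ?a * sin s) * y"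
    by (simp add: algebra_simps)
  then have "y + sin s * (x + ?a * y) = sin s * x + cos s * y" by (simp only: e1)
  ultimately show "se2_rotate s (x, y, t) = (shear_x ?a \<circ> shear_y (sin s) \<circ> shear_x ?a) (x, y, t)"
    by (simp add: se2_rotate_def rot_def shear_x_def shear_y_def)
qed

lemma se2_rotate_add: "se2_rotate (a + b) = se2_rotate a \<circ> se2_rotate b"
  by (rule ext) (clarsimp simp: se2_rotate_def rot_def cos_add sin_add; simp add: algebra_simps)

lemma lborel_preserving_se2_rotate: "lborel_preserving (se2_rotate s)"
proof -
  have gen: "lborel_preserving (se2_rotate s)" if "sin s \<noteq> 0" for s
    unfolding se2_rotate_eq_shears[OF that]
    by (intro lborel_preserving_comp lborel_preserving_shear_x lborel_preserving_shear_y)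
  show ?thesis
  proof (cases "sin s = 0")
    case True
    then have "cos s \<noteq> 0" using sin_zero_abs_cos_one by fastforce
    moreover have "sin (1::real) \<noteq> 0" using sin_gt_zero[of 1] pi_gt3 by simp
    ultimately have "sin (s - 1) \<noteq> 0" using True by (simp add: sin_diff)
    then have "lborel_preserving (se2_rotate (s - 1) \<circ> se2_rotate 1)"
      using gen \<open>sin 1 \<noteq> 0\<close> lborel_preserving_comp by blast
    then show ?thesis using se2_rotate_add[of "s - 1" 1] by simp
  qed (rule gen)
qed

section \<open>Lebesgue measure restricted to a set\<close>

definition lborel_on :: "'a::euclidean_space set \<Rightarrow> 'a measure" where
  "lborel_on X = density lborel (\<lambda>x. ennreal (indicator X x))"

lemma sets_lborel_on[simp, measurable_cong]: "sets (lborel_on X) = sets borel"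
  by (simp add: lborel_on_def)

lemma emeasure_lborel_on:
  assumes "X \<in> sets borel" "Y \<in> sets borel"
  shows "emeasure (lborel_on X) Y = emeasure lborel (X \<inter> Y)"
proof -
  have "emeasure (lborel_on X) Y = (\<integral>\<^sup>+x. ennreal (indicator X x) * indicator Y x \<partial>lborel)"
    unfolding lborel_on_def using assms by (subst emeasure_density) auto
  also have "\<dots> = (\<integral>\<^sup>+x. indicator (X \<inter> Y) x \<partial>lborel)"
    by (intro nn_integral_cong) (auto split: split_indicator)
  also have "\<dots> = emeasure lborel (X \<inter> Y)" using assms by simp
  finally show ?thesis .
qed

lemma set_integral_eq_lborel_on:
  fixes g :: "'a::euclidean_space \<Rightarrow> 'b::{banach, second_countable_topology}"
  assumes X: "X \<in> sets borel" and g: "g \<in> borel_measurable borel"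
  shows "(LINT u:X|lborel. g u) = integral\<^sup>L (lborel_on X) g"
proof -
  have "(\<lambda>x. indicator X x :: real) \<in> borel_measurable lborel" using X by simp
  then show ?thesis unfolding lborel_on_def set_lebesgue_integral_def
    by (subst integral_density) (use g in auto)
qed

lemma set_integrable_iff_lborel_on:
  fixes g :: "'a::euclidean_space \<Rightarrow> 'b::{banach, second_countable_topology}"
  assumes X: "X \<in> sets borel" and g: "g \<in> borel_measurable borel"
  shows "set_integrable lborel X g \<longleftrightarrow> integrable (lborel_on X) g"
proof -
  have "(\<lambda>x. indicator X x :: real) \<in> borel_measurable lborel" using X by simp
  then show ?thesis unfolding lborel_on_def set_integrable_def
    by (subst integrable_density) (use g in auto)
qed

lemma integral_lborel_on_distr:
  fixes g :: "'a::euclidean_space \<Rightarrow> 'b::{banach, second_countable_topology}"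
  assumes "distr (lborel_on X) borel T = lborel_on Y" and "T \<in> borel_measurable borel"
    and "g \<in> borel_measurable borel"
  shows "integral\<^sup>L (lborel_on X) (\<lambda>u. g (T u)) = integral\<^sup>L (lborel_on Y) g"
  using integral_distr[of T "lborel_on X" borel g] assms by simp

lemma integrable_lborel_on_distr_iff:
  fixes g :: "'a::euclidean_space \<Rightarrow> 'b::{banach, second_countable_topology}"
  assumes "distr (lborel_on X) borel T = lborel_on Y" and "T \<in> borel_measurable borel"
    and "g \<in> borel_measurable borel"
  shows "integrable (lborel_on X) (\<lambda>u. g (T u)) \<longleftrightarrow> integrable (lborel_on Y) g"
  using integrable_distr_eq[of T "lborel_on X" borel g] assms by simp

lemma distr_lborel_on_invariant:
  assumes T: "lborel_preserving T" and X: "X \<in> sets borel" and TX: "T -` X = X"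
  shows "distr (lborel_on X) borel T = lborel_on X"
proof (rule measure_eqI)
  fix Y assume "Y \<in> sets (distr (lborel_on X) borel T)"
  then have Y: "Y \<in> sets borel" by simp
  have Tm: "T \<in> borel_measurable borel" and Td: "distr lborel borel T = lborel"
    using T unfolding lborel_preserving_def by auto
  have "emeasure (distr (lborel_on X) borel T) Y = emeasure lborel (X \<inter> T -` Y)"
    using Tm Y X by (simp add: emeasure_distr emeasure_lborel_on measurable_sets_borel)
  also have "X \<inter> T -` Y = T -` (X \<inter> Y)" using TX by auto
  also have "emeasure lborel (T -` (X \<inter> Y)) = emeasure (distr lborel borel T) (X \<inter> Y)"
    using Tm X Y by (subst emeasure_distr) auto
  also have "\<dots> = emeasure (lborel_on X) Y" using Td X Y by (simp add: emeasure_lborel_on)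
  finally show "emeasure (distr (lborel_on X) borel T) Y = emeasure (lborel_on X) Y" .
qed simp

lemma distr_lborel_on_piecewise_translation:
  assumes D1: "D1 \<in> sets borel" and D2: "D2 \<in> sets borel" and D12: "D1 \<inter> D2 = {}"
    and Tm: "T \<in> borel_measurable borel"
    and T1: "\<And>u. u \<in> D1 \<Longrightarrow> T u = u + v1" and T2: "\<And>u. u \<in> D2 \<Longrightarrow> T u = u + v2"
    and E1: "\<And>w. w \<in> E1 \<longleftrightarrow> w - v1 \<in> D1" and E2: "\<And>w. w \<in> E2 \<longleftrightarrow> w - v2 \<in> D2"
    and E12: "E1 \<inter> E2 = {}"
  shows "distr (lborel_on (D1 \<union> D2)) borel T = lborel_on (E1 \<union> E2)"
proof -
  have E1eq: "E1 = (\<lambda>w. w + (- v1)) -` D1" and E2eq: "E2 = (\<lambda>w. w + (- v2)) -` D2"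
    using E1 E2 by auto
  have cm: "(\<lambda>w::'a. w + c) \<in> borel_measurable borel" for c
    by (intro borel_measurable_continuous_onI continuous_intros)
  have E1b: "E1 \<in> sets borel" unfolding E1eq using D1 cm by (rule measurable_sets_borel[rotated])
  have E2b: "E2 \<in> sets borel" unfolding E2eq using D2 cm by (rule measurable_sets_borel[rotated])
  show ?thesis
  proof (rule measure_eqI)
    fix Y assume "Y \<in> sets (distr (lborel_on (D1 \<union> D2)) borel T)"
    then have Y: "Y \<in> sets borel" by simp
    have TY: "T -` Y \<in> sets borel" using Tm Y by (simp add: measurable_sets_borel)
    have piece1: "D1 \<inter> T -` Y = (\<lambda>u. u + v1) -` (E1 \<inter> Y)"
      using T1 E1 by (auto simp: algebra_simps)
    have piece2: "D2 \<inter> T -` Y = (\<lambda>u. u + v2) -` (E2 \<inter> Y)"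
      using T2 E2 by (auto simp: algebra_simps)
    have "emeasure (distr (lborel_on (D1 \<union> D2)) borel T) Y = emeasure lborel ((D1 \<union> D2) \<inter> T -` Y)"
      using Tm Y D1 D2 TY by (simp add: emeasure_distr emeasure_lborel_on)
    also have "(D1 \<union> D2) \<inter> T -` Y = (D1 \<inter> T -` Y) \<union> (D2 \<inter> T -` Y)" by auto
    also have "emeasure lborel \<dots> = emeasure lborel (D1 \<inter> T -` Y) + emeasure lborel (D2 \<inter> T -` Y)"
      using D1 D2 TY D12 by (intro plus_emeasure[symmetric]) auto
    also have "\<dots> = emeasure lborel (E1 \<inter> Y) + emeasure lborel (E2 \<inter> Y)"
      unfolding piece1 piece2 using E1b E2b Y by (simp only: emeasure_lborel_translate sets.Int)
    also have "\<dots> = emeasure lborel ((E1 \<union> E2) \<inter> Y)"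
      using E1b E2b Y E12 plus_emeasure[of "E1 \<inter> Y" lborel "E2 \<inter> Y"]
      by (auto simp: Int_Un_distrib2)
    also have "\<dots> = emeasure (lborel_on (E1 \<union> E2)) Y"
      using E1b E2b Y by (intro emeasure_lborel_on[symmetric]) auto
    finally show "emeasure (distr (lborel_on (D1 \<union> D2)) borel T) Y = emeasure (lborel_on (E1 \<union> E2)) Y" .
  qed simp
qed

section \<open>Left invariance of the Haar integral\<close>

lemma Times3_in_borel:
  assumes [measurable]: "I \<in> sets borel" "J \<in> sets borel" "K \<in> sets borel"
  shows "(I \<times> J \<times> K :: se2 set) \<in> sets borel"
proof -
  have "(I \<times> J \<times> K :: se2 set)
      = {p \<in> space (borel \<Otimes>\<^sub>M (borel \<Otimes>\<^sub>M borel)). fst p \<in> I \<and> fst (snd p) \<in> J \<and> snd (snd p) \<in> K}"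
    by (auto simp: space_pair_measure)
  also have "\<dots> \<in> sets (borel \<Otimes>\<^sub>M (borel \<Otimes>\<^sub>M borel))" by measurable
  finally show ?thesis by (simp only: borel_prod)
qed

lemma se2_coordinates_measurable[measurable]:
  "(\<lambda>u::se2. fst u) \<in> borel_measurable borel"
  "(\<lambda>u::se2. fst (snd u)) \<in> borel_measurable borel"
  "(\<lambda>u::se2. snd (snd u)) \<in> borel_measurable borel"
  by (intro borel_measurable_continuous_onI continuous_intros)+

lemma se2_coordinatewise_measurable:
  fixes a b c :: "real \<Rightarrow> real"
  assumes [measurable]: "a \<in> borel_measurable borel" "b \<in> borel_measurable borel" "c \<in> borel_measurable borel"
  shows "(\<lambda>p::se2. (a (fst p), b (fst (snd p)), c (snd (snd p)))) \<in> borel_measurable borel"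
proof -
  have "(\<lambda>p::se2. (a (fst p), b (fst (snd p)), c (snd (snd p))))
      \<in> measurable (borel \<Otimes>\<^sub>M (borel \<Otimes>\<^sub>M borel)) (borel \<Otimes>\<^sub>M (borel \<Otimes>\<^sub>M borel))"
    by measurable
  then show ?thesis by (simp only: borel_prod)
qed

definition se2_dom :: "se2 set" where "se2_dom = UNIV \<times> UNIV \<times> {0..<2 * pi}"

lemma se2_dom_borel[measurable]: "se2_dom \<in> sets borel"
  unfolding se2_dom_def by (auto intro!: Times3_in_borel)

lemma se2_integral_eq: "se2_integral f = complex_of_real (1 / (2 * pi)) * (LINT p:se2_dom|lborel. f p)"
  unfolding se2_integral_def se2_dom_def ..

definition wrap_angle :: "real \<Rightarrow> real" where
  "wrap_angle t = t - 2 * pi * of_int \<lfloor>t / (2 * pi)\<rfloor>"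

lemma wrap_angle_eq:
  assumes "0 \<le> t - 2 * pi * of_int n" "t - 2 * pi * of_int n < 2 * pi"
  shows "wrap_angle t = t - 2 * pi * of_int n"
proof -
  have "\<lfloor>t / (2 * pi)\<rfloor> = n"
    using assms pi_gt_zero by (intro floor_unique) (simp_all add: field_simps)
  then show ?thesis unfolding wrap_angle_def by simp
qed

lemma wrap_angle_bounds: "0 \<le> wrap_angle t" "wrap_angle t < 2 * pi"
proof -
  let ?n = "of_int \<lfloor>t / (2 * pi)\<rfloor> :: real"
  have "2 * pi * ?n \<le> 2 * pi * (t / (2 * pi))"
    by (rule mult_left_mono[OF of_int_floor_le]) simp
  moreover have "2 * pi * (t / (2 * pi)) < 2 * pi * (?n + 1)"
    by (rule mult_strict_left_mono[OF real_of_int_floor_add_one_gt]) simp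
  ultimately show "0 \<le> wrap_angle t" "wrap_angle t < 2 * pi"
    unfolding wrap_angle_def by (simp_all add: algebra_simps)
qed

lemma wrap_angle_measurable[measurable]: "wrap_angle \<in> borel_measurable borel"
  unfolding wrap_angle_def by measurable

lemma se2_fun_shift_int:
  assumes "se2_fun f"
  shows "f (x, y, t + 2 * pi * of_int n) = f (x, y, t)"
proof (induction n arbitrary: t rule: int_induct[where k=0])
  case (step1 i)
  have "f (x, y, t + 2 * pi * of_int (i + 1)) = f (x, y, (t + 2 * pi * of_int i) + 2 * pi)"
    by (simp add: algebra_simps)
  then show ?case using step1 assms unfolding se2_fun_def by simp
next
  case (step2 i)
  have "f (x, y, t + 2 * pi * of_int i) = f (x, y, (t + 2 * pi * of_int (i - 1)) + 2 * pi)"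
    by (simp add: algebra_simps)
  then show ?case using step2 assms unfolding se2_fun_def by simp
qed simp

lemma se2_fun_wrap_angle: "se2_fun f \<Longrightarrow> f (x, y, wrap_angle t) = f (x, y, t)"
  using se2_fun_shift_int[of f x y "wrap_angle t" "\<lfloor>t / (2 * pi)\<rfloor>"]
  by (simp add: wrap_angle_def)

lemma se2_L1_measurable:
  assumes "se2_L1 f" shows "f \<in> borel_measurable borel"
proof -
  have p: "se2_fun f" and i: "set_integrable lborel se2_dom f"
    using assms unfolding se2_L1_def se2_dom_def by auto
  have m: "(\<lambda>p. indicator se2_dom p *\<^sub>R f p) \<in> borel_measurable borel"
    using borel_measurable_integrable[OF i[unfolded set_integrable_def]] by simp
  have "f = (\<lambda>p. indicator se2_dom p *\<^sub>R f p) \<circ> (\<lambda>p::se2. (fst p, fst (snd p), wrap_angle (snd (snd p))))"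
    using wrap_angle_bounds se2_fun_wrap_angle[OF p]
    by (auto simp: fun_eq_iff se2_dom_def indicator_def)
  then show ?thesis
    using measurable_comp[OF se2_coordinatewise_measurable[OF measurable_id measurable_id
        wrap_angle_measurable] m] by (simp add: id_def)
qed

lemma distr_lborel_on_rotate_angle:
  "distr (lborel_on se2_dom) borel (\<lambda>u::se2. (fst u, fst (snd u), wrap_angle (s + snd (snd u))))
    = lborel_on se2_dom"
proof -
  define s' where "s' = wrap_angle s"
  define n where "n = \<lfloor>s / (2 * pi)\<rfloor>"
  have n: "s' = s - 2 * pi * of_int n" unfolding s'_def n_def wrap_angle_def ..
  have s'r: "0 \<le> s'" "s' < 2 * pi" using wrap_angle_bounds unfolding s'_def by auto
  define D1 :: "se2 set" where "D1 = {u \<in> space borel. u \<in> se2_dom \<and> snd (snd u) + s' < 2 * pi}"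
  define D2 :: "se2 set" where "D2 = {u \<in> space borel. u \<in> se2_dom \<and> 2 * pi \<le> snd (snd u) + s'}"
  define E1 :: "se2 set" where "E1 = {u \<in> space borel. s' \<le> snd (snd u) \<and> snd (snd u) < 2 * pi}"
  define E2 :: "se2 set" where "E2 = {u \<in> space borel. 0 \<le> snd (snd u) \<and> snd (snd u) < s'}"
  have D: "D1 \<in> sets borel" "D2 \<in> sets borel" unfolding D1_def D2_def by measurable
  have "distr (lborel_on (D1 \<union> D2)) borel (\<lambda>u::se2. (fst u, fst (snd u), wrap_angle (s + snd (snd u))))
      = lborel_on (E1 \<union> E2)"
  proof (rule distr_lborel_on_piecewise_translation[where ?v1.0="(0, 0, s')" and ?v2.0="(0, 0, s' - 2 * pi)"])
    fix u :: se2
    obtain x y t where u: "u = (x, y, t)" by (cases u)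
    show "(fst u, fst (snd u), wrap_angle (s + snd (snd u))) = u + (0, 0, s')" if "u \<in> D1"
    proof -
      have "wrap_angle (s + t) = s + t - 2 * pi * of_int n"
        using that n s'r unfolding D1_def se2_dom_def u by (intro wrap_angle_eq) auto
      then show ?thesis using n u by simp
    qed
    show "(fst u, fst (snd u), wrap_angle (s + snd (snd u))) = u + (0, 0, s' - 2 * pi)" if "u \<in> D2"
    proof -
      have "wrap_angle (s + t) = s + t - 2 * pi * of_int (n + 1)"
        using that n s'r unfolding D2_def se2_dom_def u by (intro wrap_angle_eq) (auto simp: algebra_simps)
      then show ?thesis using n u by (simp add: algebra_simps)
    qed
    show "u \<in> E1 \<longleftrightarrow> u - (0, 0, s') \<in> D1" "u \<in> E2 \<longleftrightarrow> u - (0, 0, s' - 2 * pi) \<in> D2"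
      unfolding E1_def E2_def D1_def D2_def se2_dom_def u using s'r by auto
    show "(\<lambda>u::se2. (fst u, fst (snd u), wrap_angle (s + snd (snd u)))) \<in> borel_measurable borel"
      using se2_coordinatewise_measurable[of id id "\<lambda>t. wrap_angle (s + t)"] by simp
    show "D1 \<inter> D2 = {}" "E1 \<inter> E2 = {}" unfolding D1_def D2_def E1_def E2_def by auto
  qed (fact D)+
  moreover have "D1 \<union> D2 = se2_dom" "E1 \<union> E2 = se2_dom"
    unfolding D1_def D2_def E1_def E2_def se2_dom_def using s'r by auto
  ultimately show ?thesis by simp
qed

text \<open>On \<open>2 pi\<close>-periodic functions, left translation by \<open>(a, b, s)\<close> acts as a shift of the
  angle reduced modulo \<open>2 pi\<close>, then a rotation, then a translation.\<close>

lemma se2_mult_left_measure_preserving: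
  obtains T where "T \<in> borel_measurable borel" "distr (lborel_on se2_dom) borel T = lborel_on se2_dom"
    and "\<And>g u. se2_fun g \<Longrightarrow> g (se2_mult h u) = g (T u)"
proof -
  obtain a b s where h: "h = (a, b, s)" by (cases h)
  define R where "R = (\<lambda>v. v + (a, b, 0)) \<circ> se2_rotate s"
  define W where "W = (\<lambda>u::se2. (fst u, fst (snd u), wrap_angle (s + snd (snd u))))"
  have R: "lborel_preserving R"
    unfolding R_def by (intro lborel_preserving_comp lborel_preserving_se2_rotate lborel_preserving_translate)
  then have Rm: "R \<in> borel_measurable borel" unfolding lborel_preserving_def by simp
  have "R -` se2_dom = se2_dom" unfolding R_def se2_dom_def by (auto simp: se2_rotate_def)
  then have dR: "distr (lborel_on se2_dom) borel R = lborel_on se2_dom"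
    by (rule distr_lborel_on_invariant[OF R se2_dom_borel])
  have Wm: "W \<in> borel_measurable borel"
    using se2_coordinatewise_measurable[of id id "\<lambda>t. wrap_angle (s + t)"] unfolding W_def by simp
  have dW: "distr (lborel_on se2_dom) borel W = lborel_on se2_dom"
    unfolding W_def by (rule distr_lborel_on_rotate_angle)
  show ?thesis
  proof
    show "R \<circ> W \<in> borel_measurable borel" using measurable_comp[OF Wm Rm] .
    show "distr (lborel_on se2_dom) borel (R \<circ> W) = lborel_on se2_dom"
      using distr_distr[of R borel borel W "lborel_on se2_dom"] Rm Wm dR dW by simp
    fix g and u :: se2 assume p: "se2_fun g"
    obtain x y t where u: "u = (x, y, t)" by (cases u)
    have "g ((R \<circ> W) u) = g (a + fst (rot s x y), b + snd (rot s x y), wrap_angle (s + t))"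
      unfolding R_def W_def u by (simp add: se2_rotate_def add.commute)
    also have "\<dots> = g (a + fst (rot s x y), b + snd (rot s x y), s + t)" by (rule se2_fun_wrap_angle[OF p])
    finally show "g (se2_mult h u) = g ((R \<circ> W) u)" unfolding h u se2_mult_def by simp
  qed
qed

lemma integral_se2_mult_left:
  fixes g :: "se2 \<Rightarrow> 'b::{banach, second_countable_topology}"
  assumes "g \<in> borel_measurable borel" "se2_fun g"
  shows "integral\<^sup>L (lborel_on se2_dom) (\<lambda>u. g (se2_mult h u)) = integral\<^sup>L (lborel_on se2_dom) g"
proof -
  obtain T where "T \<in> borel_measurable borel" "distr (lborel_on se2_dom) borel T = lborel_on se2_dom"
    and "\<And>u. g (se2_mult h u) = g (T u)"
    using se2_mult_left_measure_preserving[of h] assms(2) by metis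
  then show ?thesis using integral_lborel_on_distr assms(1) by simp
qed

lemma integrable_se2_mult_left_iff:
  fixes g :: "se2 \<Rightarrow> 'b::{banach, second_countable_topology}"
  assumes "g \<in> borel_measurable borel" "se2_fun g"
  shows "integrable (lborel_on se2_dom) (\<lambda>u. g (se2_mult h u)) \<longleftrightarrow> integrable (lborel_on se2_dom) g"
proof -
  obtain T where "T \<in> borel_measurable borel" "distr (lborel_on se2_dom) borel T = lborel_on se2_dom"
    and "\<And>u. g (se2_mult h u) = g (T u)"
    using se2_mult_left_measure_preserving[of h] assms(2) by metis
  then show ?thesis using integrable_lborel_on_distr_iff assms(1) by simp
qed

section \<open>Reduction modulo the lattice \<open>\<int>\<^sup>2\<close>\<close>

definition unit_cell :: "se2 set" where "unit_cell = {0..<1} \<times> {0..<1} \<times> {0..<2 * pi}"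
definition centered_cell :: "se2 set" where
  "centered_cell = {-1/2..<1/2} \<times> {-1/2..<1/2} \<times> {0..<2 * pi}"
definition half_centered_cell :: "se2 set" where
  "half_centered_cell = {-1/2..<1/2} \<times> {0..<1} \<times> {0..<2 * pi}"

lemma cell_borel[measurable]:
  "unit_cell \<in> sets borel" "centered_cell \<in> sets borel" "half_centered_cell \<in> sets borel"
  unfolding unit_cell_def centered_cell_def half_centered_cell_def by (auto intro!: Times3_in_borel)

definition cell_rep1 :: "real \<Rightarrow> real" where "cell_rep1 x = x - of_int \<lfloor>x + 1/2\<rfloor>"

definition cell_rep :: "se2 \<Rightarrow> se2" where
  "cell_rep p = (cell_rep1 (fst p), cell_rep1 (fst (snd p)), snd (snd p))"

lemma cell_rep1_eq:
  assumes "-1/2 \<le> x - of_int n" "x - of_int n < 1/2"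
  shows "cell_rep1 x = x - of_int n"
proof -
  have "\<lfloor>x + 1/2\<rfloor> = n" using assms by (intro floor_unique) auto
  then show ?thesis unfolding cell_rep1_def by simp
qed

lemma cell_rep1_bounds: "-1/2 \<le> cell_rep1 x" "cell_rep1 x < 1/2"
  unfolding cell_rep1_def using of_int_floor_le[of "x + 1/2"] real_of_int_floor_add_one_gt[of "x + 1/2"]
  by linarith+

lemma cell_rep1_add_int: "cell_rep1 (x + of_int n) = cell_rep1 x"
proof -
  have "\<lfloor>x + of_int n + 1/2\<rfloor> = \<lfloor>x + 1/2\<rfloor> + n"
    by (metis add.commute floor_add_int group_cancel.add2)
  then show ?thesis unfolding cell_rep1_def by simp
qed

lemma cell_rep1_measurable[measurable]: "cell_rep1 \<in> borel_measurable borel"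
  unfolding cell_rep1_def by measurable

lemma cell_rep_measurable[measurable]: "cell_rep \<in> borel_measurable borel"
  using se2_coordinatewise_measurable[of cell_rep1 cell_rep1 id] unfolding cell_rep_def by simp

lemma distr_unit_cell_cell_rep_x:
  "distr (lborel_on unit_cell) borel (\<lambda>p. (cell_rep1 (fst p), snd p)) = lborel_on half_centered_cell"
proof -
  define D1 :: "se2 set" where "D1 = {u \<in> space borel. u \<in> unit_cell \<and> fst u < 1/2}"
  define D2 :: "se2 set" where "D2 = {u \<in> space borel. u \<in> unit_cell \<and> 1/2 \<le> fst u}"
  define E1 :: "se2 set" where "E1 = {u \<in> space borel. u \<in> half_centered_cell \<and> 0 \<le> fst u}"
  define E2 :: "se2 set" where "E2 = {u \<in> space borel. u \<in> half_centered_cell \<and> fst u < 0}"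
  have "distr (lborel_on (D1 \<union> D2)) borel (\<lambda>p::se2. (cell_rep1 (fst p), snd p)) = lborel_on (E1 \<union> E2)"
  proof (rule distr_lborel_on_piecewise_translation[where ?v1.0="(0, 0, 0)" and ?v2.0="(-1, 0, 0)"])
    show "D1 \<in> sets borel" "D2 \<in> sets borel" unfolding D1_def D2_def by measurable
    show "(\<lambda>p::se2. (cell_rep1 (fst p), snd p)) \<in> borel_measurable borel"
      using se2_coordinatewise_measurable[of cell_rep1 id id] by simp
    show "D1 \<inter> D2 = {}" "E1 \<inter> E2 = {}" unfolding D1_def D2_def E1_def E2_def by auto
    fix u :: se2
    obtain x y t where u: "u = (x, y, t)" by (cases u)
    show "(cell_rep1 (fst u), snd u) = u + (0, 0, 0)" if "u \<in> D1"
      using that cell_rep1_eq[of x 0] unfolding D1_def unit_cell_def u by simp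
    show "(cell_rep1 (fst u), snd u) = u + (-1, 0, 0)" if "u \<in> D2"
      using that cell_rep1_eq[of x 1] unfolding D2_def unit_cell_def u by simp
    show "u \<in> E1 \<longleftrightarrow> u - (0, 0, 0) \<in> D1"
      unfolding E1_def D1_def unit_cell_def half_centered_cell_def u by auto
    show "u \<in> E2 \<longleftrightarrow> u - (-1, 0, 0) \<in> D2"
      unfolding E2_def D2_def unit_cell_def half_centered_cell_def u by auto
  qed
  moreover have "D1 \<union> D2 = unit_cell" "E1 \<union> E2 = half_centered_cell"
    unfolding D1_def D2_def E1_def E2_def by auto
  ultimately show ?thesis by simp
qed

lemma distr_half_centered_cell_cell_rep_y:
  "distr (lborel_on half_centered_cell) borel (\<lambda>p. (fst p, cell_rep1 (fst (snd p)), snd (snd p)))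
    = lborel_on centered_cell"
proof -
  define D1 :: "se2 set" where "D1 = {u \<in> space borel. u \<in> half_centered_cell \<and> fst (snd u) < 1/2}"
  define D2 :: "se2 set" where "D2 = {u \<in> space borel. u \<in> half_centered_cell \<and> 1/2 \<le> fst (snd u)}"
  define E1 :: "se2 set" where "E1 = {u \<in> space borel. u \<in> centered_cell \<and> 0 \<le> fst (snd u)}"
  define E2 :: "se2 set" where "E2 = {u \<in> space borel. u \<in> centered_cell \<and> fst (snd u) < 0}"
  have "distr (lborel_on (D1 \<union> D2)) borel (\<lambda>p::se2. (fst p, cell_rep1 (fst (snd p)), snd (snd p)))
      = lborel_on (E1 \<union> E2)"
  proof (rule distr_lborel_on_piecewise_translation[where ?v1.0="(0, 0, 0)" and ?v2.0="(0, -1, 0)"])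
    show "D1 \<in> sets borel" "D2 \<in> sets borel" unfolding D1_def D2_def by measurable
    show "(\<lambda>p::se2. (fst p, cell_rep1 (fst (snd p)), snd (snd p))) \<in> borel_measurable borel"
      using se2_coordinatewise_measurable[of id cell_rep1 id] by simp
    show "D1 \<inter> D2 = {}" "E1 \<inter> E2 = {}" unfolding D1_def D2_def E1_def E2_def by auto
    fix u :: se2
    obtain x y t where u: "u = (x, y, t)" by (cases u)
    show "(fst u, cell_rep1 (fst (snd u)), snd (snd u)) = u + (0, 0, 0)" if "u \<in> D1"
      using that cell_rep1_eq[of y 0] unfolding D1_def half_centered_cell_def u by simp
    show "(fst u, cell_rep1 (fst (snd u)), snd (snd u)) = u + (0, -1, 0)" if "u \<in> D2"
      using that cell_rep1_eq[of y 1] unfolding D2_def half_centered_cell_def u by simp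
    show "u \<in> E1 \<longleftrightarrow> u - (0, 0, 0) \<in> D1"
      unfolding E1_def D1_def centered_cell_def half_centered_cell_def u by auto
    show "u \<in> E2 \<longleftrightarrow> u - (0, -1, 0) \<in> D2"
      unfolding E2_def D2_def centered_cell_def half_centered_cell_def u by auto
  qed
  moreover have "D1 \<union> D2 = half_centered_cell" "E1 \<union> E2 = centered_cell"
    unfolding D1_def D2_def E1_def E2_def by auto
  ultimately show ?thesis by simp
qed

lemma set_integral_unit_cell_cell_rep:
  fixes H :: "se2 \<Rightarrow> complex"
  assumes H[measurable]: "H \<in> borel_measurable borel"
  shows "(LINT p:unit_cell|lborel. H (cell_rep p)) = (LINT q:centered_cell|lborel. H q)"
proof -
  define CX where "CX = (\<lambda>p::se2. (cell_rep1 (fst p), snd p))"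
  define CY where "CY = (\<lambda>p::se2. (fst p, cell_rep1 (fst (snd p)), snd (snd p)))"
  have CXm: "CX \<in> borel_measurable borel"
    using se2_coordinatewise_measurable[of cell_rep1 id id] unfolding CX_def by simp
  have CYm: "CY \<in> borel_measurable borel"
    using se2_coordinatewise_measurable[of id cell_rep1 id] unfolding CY_def by simp
  have HCY: "(\<lambda>v. H (CY v)) \<in> borel_measurable borel"
    using measurable_comp[OF CYm H] by (simp add: comp_def)
  have cr: "cell_rep p = CY (CX p)" for p unfolding cell_rep_def CX_def CY_def by simp
  have "(LINT p:unit_cell|lborel. H (cell_rep p)) = integral\<^sup>L (lborel_on unit_cell) (\<lambda>p. H (cell_rep p))"
    by (rule set_integral_eq_lborel_on) measurable
  also have "\<dots> = integral\<^sup>L (lborel_on unit_cell) (\<lambda>p. H (CY (CX p)))" by (simp only: cr)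
  also have "\<dots> = integral\<^sup>L (lborel_on half_centered_cell) (\<lambda>v. H (CY v))"
    by (rule integral_lborel_on_distr[OF distr_unit_cell_cell_rep_x[folded CX_def] CXm HCY])
  also have "\<dots> = integral\<^sup>L (lborel_on centered_cell) H"
    by (rule integral_lborel_on_distr[OF distr_half_centered_cell_cell_rep_y[folded CY_def] CYm H])
  also have "\<dots> = (LINT q:centered_cell|lborel. H q)"
    by (rule set_integral_eq_lborel_on[OF cell_borel(2) H, symmetric])
  finally show ?thesis .
qed

lemma abs_le_sqrt_sum_squares: "\<bar>x\<bar> \<le> sqrt (x\<^sup>2 + y\<^sup>2)" "\<bar>y\<bar> \<le> sqrt (x\<^sup>2 + y\<^sup>2)"
proof -
  have "sqrt (x\<^sup>2) \<le> sqrt (x\<^sup>2 + y\<^sup>2)" "sqrt (y\<^sup>2) \<le> sqrt (x\<^sup>2 + y\<^sup>2)"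
    by (intro real_sqrt_le_mono; simp)+
  then show "\<bar>x\<bar> \<le> sqrt (x\<^sup>2 + y\<^sup>2)" "\<bar>y\<bar> \<le> sqrt (x\<^sup>2 + y\<^sup>2)"
    by (simp_all only: real_sqrt_abs)
qed

lemma supported_in_disk_coords:
  assumes "supported_in_disk a f" "f (x, y, t) \<noteq> 0"
  shows "\<bar>x\<bar> \<le> a" "\<bar>y\<bar> \<le> a"
proof -
  have "sqrt (x\<^sup>2 + y\<^sup>2) \<le> a" using assms unfolding supported_in_disk_def by blast
  then show "\<bar>x\<bar> \<le> a" "\<bar>y\<bar> \<le> a" using abs_le_sqrt_sum_squares[where x=x and y=y] by linarith+
qed

lemma supported_in_disk_mult: "supported_in_disk a f \<Longrightarrow> supported_in_disk a (\<lambda>p. f p * g p)"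
  unfolding supported_in_disk_def by auto

lemma supported_in_disk_mono: "a \<le> b \<Longrightarrow> supported_in_disk a f \<Longrightarrow> supported_in_disk b f"
  unfolding supported_in_disk_def by force

text \<open>A support of diameter less than \<open>1\<close> meets each coset of \<open>\<int>\<^sup>2\<close> at most once, so
  the periodization has a single nonzero term.\<close>

lemma periodize_eq_cell_rep:
  assumes "supported_in_disk (1/4) f"
  shows "periodize f p = f (cell_rep p)"
proof -
  obtain x y t where p: "p = (x, y, t)" by (cases p)
  define l0 where "l0 = (- \<lfloor>x + 1/2\<rfloor>, - \<lfloor>y + 1/2\<rfloor>)"
  have "(\<Sum>\<^sub>\<infinity>l \<in> (UNIV :: (int \<times> int) set). f (of_int (fst l) + x, of_int (snd l) + y, t))
      = (\<Sum>\<^sub>\<infinity>l \<in> {l0}. f (of_int (fst l) + x, of_int (snd l) + y, t))"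
  proof (rule infsum_cong_neutral)
    fix l :: "int \<times> int" assume l: "l \<in> UNIV - {l0}"
    show "f (of_int (fst l) + x, of_int (snd l) + y, t) = 0"
    proof (rule ccontr)
      assume "f (of_int (fst l) + x, of_int (snd l) + y, t) \<noteq> 0"
      then have "\<bar>of_int (fst l) + x\<bar> \<le> 1/4" "\<bar>of_int (snd l) + y\<bar> \<le> 1/4"
        using supported_in_disk_coords[OF assms] by auto
      then have "cell_rep1 x = x - of_int (- fst l)" "cell_rep1 y = y - of_int (- snd l)"
        by (intro cell_rep1_eq; simp add: abs_le_iff; linarith)+
      then have "l = l0" unfolding l0_def cell_rep1_def by (simp add: prod_eq_iff)
      then show False using l by simp
    qed
  qed auto
  also have "\<dots> = f (cell_rep p)" unfolding l0_def p cell_rep_def cell_rep1_def by (simp add: algebra_simps)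
  finally show ?thesis unfolding periodize_def p by simp
qed

section \<open>Left division and characters\<close>

definition se2_ldiv :: "se2 \<Rightarrow> se2 \<Rightarrow> se2" where "se2_ldiv h p = se2_mult (se2_inv h) p"

lemma se2_ldiv_eq:
  "se2_ldiv h p =
    (cos (snd (snd h)) * (fst p - fst h) + sin (snd (snd h)) * (fst (snd p) - fst (snd h)),
     - sin (snd (snd h)) * (fst p - fst h) + cos (snd (snd h)) * (fst (snd p) - fst (snd h)),
     snd (snd p) - snd (snd h))"
  unfolding se2_ldiv_def se2_mult_def se2_inv_def rot_def
  by (cases h; cases p) (simp add: algebra_simps)

lemma se2_ldiv_measurable[measurable]:
  "(\<lambda>z::se2 \<times> se2. se2_ldiv (fst z) (snd z)) \<in> borel_measurable borel"
  "(\<lambda>z::se2 \<times> se2. se2_ldiv (snd z) (fst z)) \<in> borel_measurable borel"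
  "(\<lambda>q. se2_ldiv h q) \<in> borel_measurable borel"
  "(\<lambda>h. se2_ldiv h p) \<in> borel_measurable borel"
  by (intro borel_measurable_continuous_onI; unfold se2_ldiv_eq; intro continuous_intros)+

lemma se2_ldiv_mult [simp]: "se2_ldiv h (se2_mult h u) = u"
proof -
  obtain a b s where h: "h = (a, b, s)" by (cases h)
  obtain x y t where u: "u = (x, y, t)" by (cases u)
  have c: "cos s * cos s = 1 - sin s * sin s" using sin_cos_squared_add3[of s] by linarith
  show ?thesis unfolding se2_ldiv_eq h u se2_mult_def rot_def by (simp add: algebra_simps c)
qed

lemma se2_ldiv_translation_norm:
  "(fst (se2_ldiv h p))\<^sup>2 + (fst (snd (se2_ldiv h p)))\<^sup>2
    = (fst p - fst h)\<^sup>2 + (fst (snd p) - fst (snd h))\<^sup>2"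
proof -
  define s where "s = snd (snd h)"
  define X where "X = fst p - fst h"
  define Y where "Y = fst (snd p) - fst (snd h)"
  have c: "cos s * cos s = 1 - sin s * sin s" using sin_cos_squared_add3[of s] by linarith
  show ?thesis
    unfolding se2_ldiv_eq s_def[symmetric] X_def[symmetric] Y_def[symmetric]
    by (simp add: algebra_simps power2_eq_square c)
qed

lemma se2_ldiv_shift_angle:
  "se2_ldiv h (x, y, t + 2 * pi) =
    (fst (se2_ldiv h (x, y, t)), fst (snd (se2_ldiv h (x, y, t))), snd (snd (se2_ldiv h (x, y, t))) + 2 * pi)"
  unfolding se2_ldiv_eq by simp

definition phase :: "int \<times> int \<times> int \<Rightarrow> se2 \<Rightarrow> real" where
  "phase k p = 2 * pi * (of_int (fst k) * fst p + of_int (fst (snd k)) * fst (snd p))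
    + of_int (snd (snd k)) * snd (snd p)"

lemma cnj_phi_eq_cis: "cnj (phi k p) = cis (- phase k p)"
proof -
  obtain k1 k2 k3 where k: "k = (k1, k2, k3)" by (cases k)
  obtain x y t where p: "p = (x, y, t)" by (cases p)
  have "phi k p = cis (2 * pi * (of_int k1 * x + of_int k2 * y)) * cis (of_int k3 * t)"
    unfolding phi_def k p cis_conv_exp by (simp add: algebra_simps)
  then show ?thesis unfolding cis_mult phase_def k p by (simp add: cis_cnj)
qed

lemma cis_add_2pi_int: "cis (a + 2 * pi * of_int n) = cis a"
  by (simp add: cis_mult[symmetric])

lemma cnj_phi_shift_angle: "cnj (phi k (x, y, t + 2 * pi)) = cnj (phi k (x, y, t))"
proof -
  have "- phase k (x, y, t + 2 * pi) = - phase k (x, y, t) + 2 * pi * of_int (- snd (snd k))"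
    unfolding phase_def by (simp add: algebra_simps)
  then show ?thesis unfolding cnj_phi_eq_cis by (simp only: cis_add_2pi_int)
qed

lemma cnj_phi_cell_rep: "cnj (phi k (cell_rep p)) = cnj (phi k p)"
proof -
  obtain x y t where p: "p = (x, y, t)" by (cases p)
  have "- phase k (cell_rep p)
      = - phase k p + 2 * pi * of_int (fst k * \<lfloor>x + 1/2\<rfloor> + fst (snd k) * \<lfloor>y + 1/2\<rfloor>)"
    unfolding phase_def cell_rep_def cell_rep1_def p by (simp add: algebra_simps)
  then show ?thesis unfolding cnj_phi_eq_cis by (simp only: cis_add_2pi_int)
qed

text \<open>The rotation left in the second factor is later absorbed by the radiality of \<open>rho\<close>.\<close>

lemma cnj_phi_se2_mult:
  "cnj (phi k (se2_mult h u)) = cnj (phi k h) * cnj (phi k (se2_rotate (snd (snd h)) u))"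
proof -
  obtain a b s where h: "h = (a, b, s)" by (cases h)
  obtain x y t where u: "u = (x, y, t)" by (cases u)
  have "- phase k (se2_mult h u) = - phase k h + - phase k (se2_rotate s u)"
    unfolding phase_def h u se2_mult_def se2_rotate_def by (simp add: algebra_simps)
  then show ?thesis unfolding cnj_phi_eq_cis h by (simp add: cis_mult)
qed

lemma norm_phi[simp]: "norm (phi k p) = 1"
  using cnj_phi_eq_cis[of k p] by (metis complex_mod_cnj norm_cis)

lemma cnj_phi_measurable[measurable]: "(\<lambda>p. cnj (phi k p)) \<in> borel_measurable borel"
  unfolding cnj_phi_eq_cis phase_def cis_conv_exp
  by (intro borel_measurable_continuous_onI continuous_intros)

section \<open>Null sets of coordinate lines\<close>

lemma AE_lborel_fst_neq:
  "AE z in (lborel :: ('a::euclidean_space \<times> 'b::euclidean_space) measure). fst z \<noteq> c"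
proof -
  have "AE z in (lborel \<Otimes>\<^sub>M lborel :: ('a \<times> 'b) measure). fst z \<noteq> c"
  proof (rule lborel_pair.AE_pair_measure)
    show "{x \<in> space (lborel \<Otimes>\<^sub>M lborel). fst x \<noteq> c} \<in> sets (lborel \<Otimes>\<^sub>M (lborel :: 'b measure))"
      by measurable
    show "AE x in lborel. AE y in (lborel :: 'b measure). fst (x, y) \<noteq> c"
      using AE_lborel_singleton[of c] by eventually_elim simp
  qed
  then show ?thesis by (simp only: lborel_prod)
qed

lemma AE_lborel_snd:
  assumes ae: "AE y in (lborel :: 'b::euclidean_space measure). P y"
    and P: "{y \<in> space borel. P y} \<in> sets borel"
  shows "AE z in (lborel :: ('a::euclidean_space \<times> 'b) measure). P (snd z)"
proof -
  have "AE z in (lborel \<Otimes>\<^sub>M lborel :: ('a \<times> 'b) measure). P (snd z)"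
  proof (rule lborel_pair.AE_pair_measure)
    have "{x \<in> space (lborel \<Otimes>\<^sub>M lborel). P (snd x)}
        = snd -` {y \<in> space borel. P y} \<inter> space (lborel \<Otimes>\<^sub>M (lborel :: 'b measure))"
      by (auto simp: space_pair_measure)
    also have "\<dots> \<in> sets (lborel \<Otimes>\<^sub>M (lborel :: 'b measure))"
      using P by (intro measurable_sets[OF measurable_snd]) simp
    finally show "{x \<in> space (lborel \<Otimes>\<^sub>M lborel). P (snd x)} \<in> sets (lborel \<Otimes>\<^sub>M (lborel :: 'b measure))" .
    show "AE x in (lborel :: 'a measure). AE y in (lborel :: 'b measure). P (snd (x, y))"
      using ae by simp
  qed
  then show ?thesis by (simp only: lborel_prod)
qed

lemma AE_lborel_se2_coords_neq: "AE h in (lborel :: se2 measure). fst h \<noteq> c \<and> fst (snd h) \<noteq> d"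
proof -
  have m[measurable]: "(\<lambda>y::real \<times> real. fst y) \<in> borel_measurable borel"
    by (intro borel_measurable_continuous_onI continuous_intros)
  have "AE h in (lborel :: se2 measure). fst (snd h) \<noteq> d"
    by (rule AE_lborel_snd[OF AE_lborel_fst_neq]) measurable
  with AE_lborel_fst_neq[of c] show ?thesis by eventually_elim simp
qed

lemma AE_lborel_on_se2_coords_neq:
  fixes X :: "se2 set"
  assumes [measurable]: "X \<in> sets borel"
  shows "AE h in lborel_on X. fst h \<noteq> c \<and> fst (snd h) \<noteq> d"
  unfolding lborel_on_def using AE_lborel_se2_coords_neq[of c d]
  by (subst AE_density) (auto elim: AE_mp)

section \<open>The convolution theorem on \<open>SE(2)\<close>\<close>

lemma se2_fun_ldiv: "se2_fun rho \<Longrightarrow> se2_fun (\<lambda>q. rho (se2_ldiv h q))"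
  unfolding se2_fun_def se2_ldiv_shift_angle by (metis prod.collapse)

lemma se2_fun_mult: "se2_fun f \<Longrightarrow> se2_fun g \<Longrightarrow> se2_fun (\<lambda>p. f p * g p)"
  unfolding se2_fun_def by simp

lemma se2_fun_norm: "se2_fun f \<Longrightarrow> se2_fun (\<lambda>p. norm (f p))"
  unfolding se2_fun_def by simp

lemma se2_fun_cnj_phi: "se2_fun (\<lambda>p. cnj (phi k p))"
  unfolding se2_fun_def by (simp add: cnj_phi_shift_angle)

lemma radial_transl_se2_rotate: "radial_transl rho \<Longrightarrow> rho (se2_rotate s u) = rho u"
  unfolding radial_transl_def se2_rotate_def by (cases u) simp

lemma set_integral_ldiv_radial:
  fixes rho :: "se2 \<Rightarrow> complex"
  assumes [measurable]: "rho \<in> borel_measurable borel" and "se2_fun rho" "radial_transl rho"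
  shows "(LINT q:se2_dom|lborel. rho (se2_ldiv h q) * cnj (phi k q))
    = cnj (phi k h) * (LINT u:se2_dom|lborel. rho u * cnj (phi k u))"
proof -
  define g where "g = (\<lambda>q. rho (se2_ldiv h q) * cnj (phi k q))"
  define R where "R = (\<lambda>u. rho u * cnj (phi k u))"
  define s where "s = snd (snd h)"
  have gm: "g \<in> borel_measurable borel" and Rm: "R \<in> borel_measurable borel"
    unfolding g_def R_def by measurable
  have gp: "se2_fun g"
    unfolding g_def using assms(2) by (intro se2_fun_mult se2_fun_ldiv se2_fun_cnj_phi)
  have Sm: "se2_rotate s \<in> borel_measurable borel"
    using lborel_preserving_se2_rotate unfolding lborel_preserving_def by simp
  have "se2_rotate s -` se2_dom = se2_dom" unfolding se2_dom_def by (auto simp: se2_rotate_def)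
  then have dS: "distr (lborel_on se2_dom) borel (se2_rotate s) = lborel_on se2_dom"
    by (rule distr_lborel_on_invariant[OF lborel_preserving_se2_rotate se2_dom_borel])
  have g_mult: "g (se2_mult h u) = cnj (phi k h) * R (se2_rotate s u)" for u
    unfolding g_def R_def cnj_phi_se2_mult s_def radial_transl_se2_rotate[OF assms(3)] by simp
  have "(LINT q:se2_dom|lborel. rho (se2_ldiv h q) * cnj (phi k q)) = integral\<^sup>L (lborel_on se2_dom) g"
    unfolding g_def[symmetric] by (rule set_integral_eq_lborel_on[OF se2_dom_borel gm])
  also have "\<dots> = integral\<^sup>L (lborel_on se2_dom) (\<lambda>u. g (se2_mult h u))"
    by (rule integral_se2_mult_left[OF gm gp, symmetric])
  also have "\<dots> = cnj (phi k h) * integral\<^sup>L (lborel_on se2_dom) (\<lambda>u. R (se2_rotate s u))"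
    unfolding g_mult by simp
  also have "integral\<^sup>L (lborel_on se2_dom) (\<lambda>u. R (se2_rotate s u)) = integral\<^sup>L (lborel_on se2_dom) R"
    by (rule integral_lborel_on_distr[OF dS Sm Rm])
  also have "\<dots> = (LINT u:se2_dom|lborel. rho u * cnj (phi k u))"
    unfolding R_def by (rule set_integral_eq_lborel_on[symmetric]) measurable
  finally show ?thesis .
qed

lemma set_integral_norm_ldiv:
  fixes rho :: "se2 \<Rightarrow> complex"
  assumes [measurable]: "rho \<in> borel_measurable borel" and "se2_fun rho"
  shows "(LINT q:se2_dom|lborel. norm (rho (se2_ldiv h q))) = (LINT u:se2_dom|lborel. norm (rho u))"
proof -
  define g where "g = (\<lambda>q. norm (rho (se2_ldiv h q)))"
  have gm: "g \<in> borel_measurable borel" unfolding g_def by measurable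
  have gp: "se2_fun g" unfolding g_def using assms(2) by (intro se2_fun_norm se2_fun_ldiv)
  have "(LINT q:se2_dom|lborel. norm (rho (se2_ldiv h q))) = integral\<^sup>L (lborel_on se2_dom) g"
    unfolding g_def[symmetric] by (rule set_integral_eq_lborel_on[OF se2_dom_borel gm])
  also have "\<dots> = integral\<^sup>L (lborel_on se2_dom) (\<lambda>u. g (se2_mult h u))"
    by (rule integral_se2_mult_left[OF gm gp, symmetric])
  also have "\<dots> = (LINT u:se2_dom|lborel. norm (rho u))"
    unfolding g_def se2_ldiv_mult by (rule set_integral_eq_lborel_on[symmetric]) measurable
  finally show ?thesis .
qed

lemma se2_mult_left_measurable[measurable]: "se2_mult h \<in> borel_measurable borel"
proof -
  have "se2_mult h = (\<lambda>u. u + h) \<circ> se2_rotate (snd (snd h))"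
    unfolding se2_mult_def se2_rotate_def by (cases h) (auto simp: fun_eq_iff add.commute)
  then show ?thesis
    using lborel_preserving_comp[OF lborel_preserving_se2_rotate lborel_preserving_translate]
    unfolding lborel_preserving_def by metis
qed

lemma set_integrable_ldiv_cnj_phi:
  fixes rho :: "se2 \<Rightarrow> complex"
  assumes [measurable]: "rho \<in> borel_measurable borel" and "se2_fun rho"
    and "set_integrable lborel se2_dom rho"
  shows "set_integrable lborel se2_dom (\<lambda>q. rho (se2_ldiv h q) * cnj (phi k q))"
proof -
  define g where "g = (\<lambda>q. rho (se2_ldiv h q) * cnj (phi k q))"
  have gm[measurable]: "g \<in> borel_measurable borel" unfolding g_def by measurable
  have gp: "se2_fun g"
    unfolding g_def using assms(2) by (intro se2_fun_mult se2_fun_ldiv se2_fun_cnj_phi)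
  have "integrable (lborel_on se2_dom) rho"
    using assms(3) set_integrable_iff_lborel_on[OF se2_dom_borel assms(1)] by simp
  then have "integrable (lborel_on se2_dom) (\<lambda>u. g (se2_mult h u))"
    by (rule Bochner_Integration.integrable_bound) (simp_all add: g_def norm_mult)
  then have "integrable (lborel_on se2_dom) g" using integrable_se2_mult_left_iff[OF gm gp, of h] by simp
  then show ?thesis using set_integrable_iff_lborel_on[OF se2_dom_borel gm] unfolding g_def by simp
qed

lemma se2_pair_measurable[measurable]:
  "(fst :: se2 \<times> se2 \<Rightarrow> se2) \<in> borel_measurable borel"
  "(snd :: se2 \<times> se2 \<Rightarrow> se2) \<in> borel_measurable borel"
  by (intro borel_measurable_continuous_onI continuous_intros)+

lemma measurable_lborel_se2_pair: "measurable (lborel \<Otimes>\<^sub>M lborel :: (se2 \<times> se2) measure) N = measurable borel N"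
  unfolding lborel_prod by (rule measurable_cong_sets) auto

lemma set_integral_ldiv_measurable:
  fixes f rho :: "se2 \<Rightarrow> complex"
  assumes [measurable]: "f \<in> borel_measurable borel" "rho \<in> borel_measurable borel"
  shows "(\<lambda>q. LINT h:se2_dom|lborel. f h * rho (se2_ldiv h q)) \<in> borel_measurable borel"
proof -
  have "(\<lambda>z::se2 \<times> se2. indicator se2_dom (snd z) *\<^sub>R (f (snd z) * rho (se2_ldiv (snd z) (fst z))))
      \<in> borel_measurable borel"
    by measurable
  then have "case_prod (\<lambda>q h. indicator se2_dom h *\<^sub>R (f h * rho (se2_ldiv h q)))
      \<in> borel_measurable (lborel \<Otimes>\<^sub>M lborel)"
    unfolding measurable_lborel_se2_pair by (simp add: case_prod_beta')
  then have "(\<lambda>q. \<integral>h. indicator se2_dom h *\<^sub>R (f h * rho (se2_ldiv h q)) \<partial>lborel) \<in> borel_measurable lborel"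
    by (rule lborel.borel_measurable_lebesgue_integral)
  then show ?thesis unfolding set_lebesgue_integral_def by simp
qed

lemma integrable_convolution_integrand:
  fixes f rho :: "se2 \<Rightarrow> complex"
  assumes [measurable]: "f \<in> borel_measurable borel" "rho \<in> borel_measurable borel"
    and fi: "set_integrable lborel se2_dom f" and ri: "set_integrable lborel se2_dom rho"
    and rp: "se2_fun rho"
  shows "integrable (lborel \<Otimes>\<^sub>M lborel) (\<lambda>(h, q). indicator se2_dom h *\<^sub>R
    (indicator se2_dom q *\<^sub>R (f h * (rho (se2_ldiv h q) * cnj (phi k q)))))"
    (is "integrable _ (case_prod ?F)")
proof (rule lborel_pair.Fubini_integrable)
  define Nr where "Nr = (LINT u:se2_dom|lborel. norm (rho u))"
  have "(\<lambda>z. ?F (fst z) (snd z)) \<in> borel_measurable (borel :: (se2 \<times> se2) measure)"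
    by measurable
  then show "case_prod ?F \<in> borel_measurable (lborel \<Otimes>\<^sub>M lborel)"
    unfolding measurable_lborel_se2_pair by (simp add: case_prod_beta')
  have "(\<integral>q. norm (case_prod ?F (h, q)) \<partial>lborel)
      = (\<integral>q. (indicator se2_dom h * norm (f h)) * (indicator se2_dom q * norm (rho (se2_ldiv h q))) \<partial>lborel)"
    for h by (intro Bochner_Integration.integral_cong) (auto simp: norm_mult split: split_indicator)
  also have "\<dots> h = indicator se2_dom h * norm (f h) * Nr" for h
    using set_integral_norm_ldiv[OF assms(2) rp, of h] unfolding Nr_def set_lebesgue_integral_def by simp
  finally have norms: "(\<integral>q. norm (case_prod ?F (h, q)) \<partial>lborel) = norm (indicator se2_dom h *\<^sub>R f h) * Nr"
    for h by (simp split: split_indicator)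
  have "integrable lborel (\<lambda>h. indicator se2_dom h *\<^sub>R f h)" using fi unfolding set_integrable_def .
  then show "integrable lborel (\<lambda>h. \<integral>q. norm (case_prod ?F (h, q)) \<partial>lborel)"
    unfolding norms by (intro integrable_mult_left integrable_norm)
  show "AE h in lborel. integrable lborel (\<lambda>q. case_prod ?F (h, q))"
  proof (rule AE_I2)
    fix h :: se2
    show "integrable lborel (\<lambda>q. case_prod ?F (h, q))"
    proof (cases "h \<in> se2_dom")
      case True
      have "integrable lborel (\<lambda>q. indicator se2_dom q *\<^sub>R (rho (se2_ldiv h q) * cnj (phi k q)))"
        using set_integrable_ldiv_cnj_phi[OF assms(2) rp ri, of h k] unfolding set_integrable_def .
      then have "integrable lborel
          (\<lambda>q. f h * (indicator se2_dom q *\<^sub>R (rho (se2_ldiv h q) * cnj (phi k q))))"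
        by (rule integrable_mult_right)
      then show ?thesis using True by simp
    qed simp
  qed
qed

lemma set_integral_convolution_cnj_phi:
  fixes f rho :: "se2 \<Rightarrow> complex"
  assumes [measurable]: "f \<in> borel_measurable borel" "rho \<in> borel_measurable borel"
    and "set_integrable lborel se2_dom f" "set_integrable lborel se2_dom rho"
    and "se2_fun rho" "radial_transl rho"
  shows "(LINT q:se2_dom|lborel. (LINT h:se2_dom|lborel. f h * rho (se2_ldiv h q)) * cnj (phi k q))
       = (LINT h:se2_dom|lborel. f h * cnj (phi k h)) * (LINT u:se2_dom|lborel. rho u * cnj (phi k u))"
proof -
  define F where "F = (\<lambda>h q. indicator se2_dom h *\<^sub>R
    (indicator se2_dom q *\<^sub>R (f h * (rho (se2_ldiv h q) * cnj (phi k q)))))"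
  define Ir where "Ir = (LINT u:se2_dom|lborel. rho u * cnj (phi k u))"
  have "(LINT q:se2_dom|lborel. (LINT h:se2_dom|lborel. f h * rho (se2_ldiv h q)) * cnj (phi k q))
      = (\<integral>q. \<integral>h. F h q \<partial>lborel \<partial>lborel)"
    unfolding set_lebesgue_integral_def F_def
    by (intro Bochner_Integration.integral_cong refl)
      (simp flip: integral_mult_left_zero integral_scaleR_right add: mult.assoc split: split_indicator)
  also have "\<dots> = (\<integral>h. \<integral>q. F h q \<partial>lborel \<partial>lborel)"
    using lborel_pair.Fubini_integral integrable_convolution_integrand[OF assms(1-5)]
    unfolding F_def by blast
  also have "\<dots> = (\<integral>h. indicator se2_dom h *\<^sub>R (f h * cnj (phi k h)) * Ir \<partial>lborel)"
  proof (intro Bochner_Integration.integral_cong refl)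
    fix h :: se2
    have "(\<integral>q. F h q \<partial>lborel)
        = indicator se2_dom h *\<^sub>R (f h * (\<integral>q. indicator se2_dom q *\<^sub>R (rho (se2_ldiv h q) * cnj (phi k q)) \<partial>lborel))"
      unfolding F_def by (simp flip: integral_mult_right_zero integral_scaleR_right)
    also have "(\<integral>q. indicator se2_dom q *\<^sub>R (rho (se2_ldiv h q) * cnj (phi k q)) \<partial>lborel) = cnj (phi k h) * Ir"
      using set_integral_ldiv_radial[OF assms(2,5,6), of h k] unfolding Ir_def set_lebesgue_integral_def .
    finally show "(\<integral>q. F h q \<partial>lborel) = indicator se2_dom h *\<^sub>R (f h * cnj (phi k h)) * Ir"
      by (simp add: algebra_simps)
  qed
  also have "\<dots> = (LINT h:se2_dom|lborel. f h * cnj (phi k h)) * Ir"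
    unfolding set_lebesgue_integral_def by (rule integral_mult_left_zero)
  finally show ?thesis unfolding Ir_def .
qed

definition se2_coeff :: "(se2 \<Rightarrow> complex) \<Rightarrow> int \<times> int \<times> int \<Rightarrow> complex" where
  "se2_coeff f k = se2_integral (\<lambda>p. f p * cnj (phi k p))"

lemma convX_eq_set_integral:
  "convX psi g p = complex_of_real (1 / (2 * pi)) * (LINT h:se2_dom|lborel. psi h * g (se2_ldiv h p))"
  unfolding convX_def se2_integral_eq se2_ldiv_def ..

lemma convX_measurable[measurable]:
  "f \<in> borel_measurable borel \<Longrightarrow> rho \<in> borel_measurable borel \<Longrightarrow> convX f rho \<in> borel_measurable borel"
  unfolding convX_eq_set_integral[abs_def] using set_integral_ldiv_measurable by measurable

theorem se2_coeff_convX: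
  assumes "se2_L1 f" "se2_L1 rho" "radial_transl rho"
  shows "se2_coeff (convX f rho) k = se2_coeff f k * se2_coeff rho k"
proof -
  have "f \<in> borel_measurable borel" "rho \<in> borel_measurable borel"
    using assms(1,2) by (simp_all add: se2_L1_measurable)
  moreover have "set_integrable lborel se2_dom f" "set_integrable lborel se2_dom rho" "se2_fun rho"
    using assms(1,2) unfolding se2_L1_def se2_dom_def by auto
  ultimately have conv: "(LINT q:se2_dom|lborel. (LINT h:se2_dom|lborel. f h * rho (se2_ldiv h q)) * cnj (phi k q))
      = (LINT h:se2_dom|lborel. f h * cnj (phi k h)) * (LINT u:se2_dom|lborel. rho u * cnj (phi k u))"
    using assms(3) by (rule set_integral_convolution_cnj_phi)
  define c where "c = complex_of_real (1 / (2 * pi))"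
  have "se2_coeff (convX f rho) k
      = c * (c * (LINT q:se2_dom|lborel. (LINT h:se2_dom|lborel. f h * rho (se2_ldiv h q)) * cnj (phi k q)))"
    unfolding se2_coeff_def se2_integral_eq convX_eq_set_integral c_def[symmetric] mult.assoc
      set_integral_mult_right ..
  also have "\<dots> = c * (c * ((LINT h:se2_dom|lborel. f h * cnj (phi k h))
      * (LINT u:se2_dom|lborel. rho u * cnj (phi k u))))"
    unfolding conv ..
  finally show ?thesis
    unfolding se2_coeff_def se2_integral_eq c_def[symmetric] by (simp add: algebra_simps)
qed

section \<open>Periodization of functions of small support\<close>

lemma supported_in_disk_ldiv:
  assumes "supported_in_disk r rho" "rho (se2_ldiv h q) \<noteq> 0"
  shows "sqrt ((fst q - fst h)\<^sup>2 + (fst (snd q) - fst (snd h))\<^sup>2) \<le> r"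
  using assms se2_ldiv_translation_norm[of h q] unfolding supported_in_disk_def
  by (metis prod.collapse)

lemma cell_rep1_eq_self: "-1/2 \<le> a \<Longrightarrow> a < 1/2 \<Longrightarrow> cell_rep1 a = a"
  using cell_rep1_eq[of a 0] by simp

lemma cell_rep1_eq_self_if_small:
  assumes "-3/4 < a" "a < 3/4" "\<bar>cell_rep1 a\<bar> \<le> 1/4"
  shows "cell_rep1 a = a"
proof -
  consider "a < -1/2" | "-1/2 \<le> a \<and> a < 1/2" | "1/2 \<le> a" by linarith
  then show ?thesis
  proof cases
    case 1
    then have "cell_rep1 a = a + 1" using assms cell_rep1_eq[of a "-1"] by simp
    then show ?thesis using assms 1 by simp
  next
    case 3
    then have "cell_rep1 a = a - 1" using assms cell_rep1_eq[of a 1] by simp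
    then show ?thesis using assms 3 by simp
  qed (simp add: cell_rep1_eq_self)
qed

text \<open>Off the null lines \<open>x = -3/4\<close> and \<open>y = -3/4\<close>, the two support conditions force every
  \<open>h\<close> contributing to the convolution at \<open>q\<close> into the centered cell, where \<open>cell_rep\<close> is the
  identity.\<close>

lemma mult_ldiv_cell_rep:
  assumes f: "supported_in_disk (1/4) f" and rho: "supported_in_disk (1/4) rho"
    and q: "-1/2 \<le> fst q" "fst q < 1/2" "-1/2 \<le> fst (snd q)" "fst (snd q) < 1/2"
    and h: "fst h \<noteq> -3/4" "fst (snd h) \<noteq> -3/4"
  shows "f (cell_rep h) * rho (se2_ldiv h q) = f h * rho (se2_ldiv h q)"
proof (cases "rho (se2_ldiv h q) = 0")
  case False
  obtain a b s where hh: "h = (a, b, s)" by (cases h)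
  have "sqrt ((fst q - a)\<^sup>2 + (fst (snd q) - b)\<^sup>2) \<le> 1/4"
    using supported_in_disk_ldiv[OF rho False] hh by simp
  then have "\<bar>fst q - a\<bar> \<le> 1/4" "\<bar>fst (snd q) - b\<bar> \<le> 1/4"
    using abs_le_sqrt_sum_squares[where x="fst q - a" and y="fst (snd q) - b"] by linarith+
  then have "-3/4 \<le> a" "a < 3/4" "-3/4 \<le> b" "b < 3/4" using q unfolding abs_le_iff by linarith+
  then have near: "-3/4 < a" "a < 3/4" "-3/4 < b" "b < 3/4" using h hh by auto
  have "cell_rep h = h" if "f (cell_rep h) \<noteq> 0 \<or> f h \<noteq> 0"
    using that
  proof
    assume "f (cell_rep h) \<noteq> 0"
    then have "\<bar>cell_rep1 a\<bar> \<le> 1/4" "\<bar>cell_rep1 b\<bar> \<le> 1/4"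
      using supported_in_disk_coords[OF f] unfolding cell_rep_def hh by auto
    then show ?thesis using near cell_rep1_eq_self_if_small unfolding cell_rep_def hh by simp
  next
    assume "f h \<noteq> 0"
    then have "\<bar>a\<bar> \<le> 1/4" "\<bar>b\<bar> \<le> 1/4" using supported_in_disk_coords[OF f] hh by auto
    then show ?thesis using cell_rep1_eq_self unfolding cell_rep_def hh by (simp add: abs_le_iff)
  qed
  then show ?thesis by fastforce
qed simp

lemma convX_periodize:
  fixes f rho :: "se2 \<Rightarrow> complex"
  assumes [measurable]: "f \<in> borel_measurable borel" "rho \<in> borel_measurable borel"
    and fs: "supported_in_disk (1/4) f" and rs: "supported_in_disk (1/4) rho"
  shows "convX (periodize f) rho p = convX f rho (cell_rep p)"
proof -
  obtain x y t where p: "p = (x, y, t)" by (cases p)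
  define l :: se2 where "l = (of_int \<lfloor>x + 1/2\<rfloor>, of_int \<lfloor>y + 1/2\<rfloor>, 0)"
  define g where "g = (\<lambda>h. f (cell_rep h) * rho (se2_ldiv h p))"
  have gm: "g \<in> borel_measurable borel" unfolding g_def by measurable
  have Tm: "(\<lambda>u::se2. u + l) \<in> borel_measurable borel"
    using lborel_preserving_translate unfolding lborel_preserving_def by blast
  have "(\<lambda>u::se2. u + l) -` se2_dom = se2_dom" unfolding se2_dom_def l_def by auto
  then have dT: "distr (lborel_on se2_dom) borel (\<lambda>u. u + l) = lborel_on se2_dom"
    by (rule distr_lborel_on_invariant[OF lborel_preserving_translate se2_dom_borel])
  have g_shift: "g (h + l) = f (cell_rep h) * rho (se2_ldiv h (cell_rep p))" for h
  proof -
    have "cell_rep (h + l) = cell_rep h" unfolding cell_rep_def l_def using cell_rep1_add_int by (cases h) simp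
    moreover have "se2_ldiv (h + l) p = se2_ldiv h (cell_rep p)"
      unfolding se2_ldiv_eq cell_rep_def cell_rep1_def l_def p by (cases h) (simp add: algebra_simps)
    ultimately show ?thesis unfolding g_def by simp
  qed
  have "(LINT h:se2_dom|lborel. f (cell_rep h) * rho (se2_ldiv h p)) = integral\<^sup>L (lborel_on se2_dom) g"
    unfolding g_def by (rule set_integral_eq_lborel_on) measurable
  also have "\<dots> = integral\<^sup>L (lborel_on se2_dom) (\<lambda>h. g (h + l))"
    by (rule integral_lborel_on_distr[OF dT Tm gm, symmetric])
  also have "\<dots> = integral\<^sup>L (lborel_on se2_dom) (\<lambda>h. f h * rho (se2_ldiv h (cell_rep p)))"
    unfolding g_shift
  proof (rule integral_cong_AE)
    show "AE h in lborel_on se2_dom.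
        f (cell_rep h) * rho (se2_ldiv h (cell_rep p)) = f h * rho (se2_ldiv h (cell_rep p))"
      using AE_lborel_on_se2_coords_neq[OF se2_dom_borel, of "-3/4" "-3/4"]
      by eventually_elim (rule mult_ldiv_cell_rep[OF fs rs],
          insert cell_rep1_bounds[of "fst p"] cell_rep1_bounds[of "fst (snd p)"], auto simp: cell_rep_def)
  qed simp_all
  also have "\<dots> = (LINT h:se2_dom|lborel. f h * rho (se2_ldiv h (cell_rep p)))"
    by (rule set_integral_eq_lborel_on[symmetric]) measurable
  finally show ?thesis
    unfolding convX_eq_set_integral periodize_eq_cell_rep[OF fs, abs_def] by simp
qed

lemma supported_in_disk_convX:
  assumes "supported_in_disk a f" "supported_in_disk b rho"
  shows "supported_in_disk (a + b) (convX f rho)"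
  unfolding supported_in_disk_def
proof (intro allI impI)
  fix x y t assume "convX f rho (x, y, t) \<noteq> 0"
  moreover have "convX f rho (x, y, t) = 0" if "\<And>h. f h * rho (se2_ldiv h (x, y, t)) = 0"
    unfolding convX_eq_set_integral that by simp
  ultimately obtain h where nz: "f h * rho (se2_ldiv h (x, y, t)) \<noteq> 0" by blast
  obtain c d s where hh: "h = (c, d, s)" by (cases h)
  have "sqrt (c\<^sup>2 + d\<^sup>2) \<le> a" using assms(1) nz hh unfolding supported_in_disk_def by auto
  moreover have "sqrt ((x - c)\<^sup>2 + (y - d)\<^sup>2) \<le> b"
    using supported_in_disk_ldiv[OF assms(2)] nz hh by auto
  moreover have "sqrt (x\<^sup>2 + y\<^sup>2) \<le> sqrt (c\<^sup>2 + d\<^sup>2) + sqrt ((x - c)\<^sup>2 + (y - d)\<^sup>2)"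
    using real_sqrt_sum_squares_triangle_ineq[of c "x - c" d "y - d"] by simp
  ultimately show "sqrt (x\<^sup>2 + y\<^sup>2) \<le> a + b" by linarith
qed

text \<open>A support in the closed disk of radius \<open>1/2\<close> leaves the centered cell only along
  its two missing edges, which are null.\<close>

lemma set_integral_centered_cell:
  fixes H :: "se2 \<Rightarrow> complex"
  assumes [measurable]: "H \<in> borel_measurable borel" and "supported_in_disk (1/2) H"
  shows "(LINT q:centered_cell|lborel. H q) = (LINT q:se2_dom|lborel. H q)"
  unfolding set_lebesgue_integral_def
proof (rule integral_cong_AE)
  show "AE q in lborel. indicator centered_cell q *\<^sub>R H q = indicator se2_dom q *\<^sub>R H q"
    using AE_lborel_se2_coords_neq[of "1/2" "1/2"]
  proof eventually_elim
    case (elim q)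
    obtain x y t where q: "q = (x, y, t)" by (cases q)
    show ?case
    proof (cases "H q = 0")
      case False
      then have "\<bar>x\<bar> \<le> 1/2" "\<bar>y\<bar> \<le> 1/2" using supported_in_disk_coords[OF assms(2)] q by auto
      then show ?thesis using elim
        unfolding q centered_cell_def se2_dom_def by (auto simp: abs_le_iff split: split_indicator)
    qed simp
  qed
qed simp_all

lemma fourierOmega_eq_se2_coeff:
  assumes "rho \<in> borel_measurable borel" "supported_in_disk (1/2) rho"
  shows "fourierOmega rho k = se2_coeff rho k"
  unfolding fourierOmega_def se2_coeff_def se2_integral_eq centered_cell_def[symmetric]
  using assms by (simp add: set_integral_centered_cell supported_in_disk_mult)

lemma fourierX_cell_rep:
  assumes [measurable]: "H \<in> borel_measurable borel" and "supported_in_disk (1/2) H"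
  shows "fourierX (\<lambda>p. H (cell_rep p)) k = se2_coeff H k"
proof -
  have "(LINT p:unit_cell|lborel. H (cell_rep p) * cnj (phi k p))
      = (LINT p:unit_cell|lborel. H (cell_rep p) * cnj (phi k (cell_rep p)))"
    by (simp only: cnj_phi_cell_rep)
  also have "\<dots> = (LINT q:centered_cell|lborel. H q * cnj (phi k q))"
    by (rule set_integral_unit_cell_cell_rep) measurable
  also have "\<dots> = (LINT q:se2_dom|lborel. H q * cnj (phi k q))"
    using assms(2) by (intro set_integral_centered_cell supported_in_disk_mult) measurable
  finally show ?thesis
    unfolding fourierX_def se2_coeff_def se2_integral_eq unit_cell_def[symmetric] by simp
qed

theorem mainTheorem6:
  fixes f rho :: "se2 \<Rightarrow> complex" and k :: "int \<times> int \<times> int"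
  assumes "se2_L1 f" and "se2_L1 rho"
    and "supported_in_disk (1/4) f" and "supported_in_disk (1/4) rho"
    and "radial_transl rho"
  shows "fourierX (convX (periodize f) rho) k = fourierX (periodize f) k * fourierOmega rho k"
proof -
  have fm[measurable]: "f \<in> borel_measurable borel" and rm[measurable]: "rho \<in> borel_measurable borel"
    using assms(1,2) by (simp_all add: se2_L1_measurable)
  have small: "supported_in_disk (1/2) f" "supported_in_disk (1/2) rho"
    using assms(3,4) supported_in_disk_mono[of "1/4" "1/2"] by simp_all
  have "supported_in_disk (1/2) (convX f rho)"
    using supported_in_disk_convX[OF assms(3,4)] by simp
  then have "fourierX (convX (periodize f) rho) k = se2_coeff (convX f rho) k"
    unfolding convX_periodize[OF fm rm assms(3,4), abs_def] by (simp add: fourierX_cell_rep)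
  also have "\<dots> = se2_coeff f k * se2_coeff rho k"
    using assms(1,2,5) by (rule se2_coeff_convX)
  also have "\<dots> = fourierX (periodize f) k * fourierOmega rho k"
    using small by (simp add: periodize_eq_cell_rep[OF assms(3), abs_def] fourierX_cell_rep
        fourierOmega_eq_se2_coeff)
  finally show ?thesis .
qed

end
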